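(* Let $\mathbf{G}=\begin{bmatrix}\mathbf{G}_1\\ \mathbf{G}_0\end{bmatrix}\in\mathbb{F}_2^{m\times n}$ be a triorthogonal matrix with linearly independent rows ($\mathbf{G}_1\in\mathbb{F}_2^{k\times n}$ the odd-weight rows, $\mathbf{G}_0$ the even-weight rows), and let $\mathcal{Q}^T=\mathrm{CSS}(\mathcal{C}_1,\mathcal{C}_2)$ be the associated triorthogonal $[[n,k,d]]$ code, with $\mathcal{C}_1$ generated by $\mathbf{G}$ and $\mathcal{C}_2$ the dual of the code generated by $\mathbf{G}_0$; assume $\mathcal{Q}^T$ is T-triorthogonal. Let $\mathcal{C}\subseteq\mathbb{F}_2^n$ be a binary linear code with $\mathcal{C}_1\subset\mathcal{C}\subset\mathcal{C}_2$ such that $\mathcal{Q}^{\rm Sym}=\mathrm{CSS}(\mathcal{C},\mathcal{C})$ is a symmetric $[[n,k,d']]$ CSS code. Then $\mathcal{Q}^T$ and $\mathcal{Q}^{\rm Sym}$ form a CNOT-transversal code pair (with $\mathcal{Q}^T$ as control and $\mathcal{Q}^{\rm Sym}$ as target), and $d'\ge d$.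
   Context: A binary matrix $\mathbf{G}=[G_{ij}]$ is triorthogonal if $\sum_i G_{ai}G_{bi}=0\pmod 2$ for all rows $a\ne b$ and $\sum_i G_{ai}G_{bi}G_{ci}=0\pmod 2$ for all distinct rows $a,b,c$. For binary linear codes $\mathcal{C}_a,\mathcal{C}_b\subseteq\mathbb{F}_2^n$ with $\mathcal{C}_b^\perp\subset\mathcal{C}_a$, $\mathrm{CSS}(\mathcal{C}_a,\mathcal{C}_b)$ is spanned by $|\bm{\psi}\rangle_L=|\mathcal{C}_b^\perp|^{-1/2}\sum_{\mathbf{y}\in\mathcal{C}_b^\perp}|\bm{\psi}\mathbf{A}+\mathbf{y}\rangle$, $\bm{\psi}\in\mathbb{F}_2^k$, where $\mathbf{A}\in\mathbb{F}_2^{k\times n}$ (a mapping matrix) has rows forming representatives of a basis of $\mathcal{C}_a/\mathcal{C}_b^\perp$; its number of logical qubits is $k=\dim\mathcal{C}_a+\dim\mathcal{C}_b-n$ and its distance is $\min(d_a',d_b')$ where $d_a'$ is the minimum Hamming weight of vectors in $\mathcal{C}_a\setminus\mathcal{C}_b^\perp$ and $d_b'$ that of vectors in $\mathcal{C}_b\setminus\mathcal{C}_a^\perp$. A CSS code is symmetric if $\mathcal{C}_a=\mathcal{C}_b$ (so $\mathcal{C}^\perp\subseteq\mathcal{C}$). The triorthogonal code uses mapping matrix $\mathbf{G}_1$. It is called T-triorthogonal if it is Pauli $X$-transversal (applying $\mathbf{X}$ to every physical qubit implements logical $\mathbf{X}$ on every logical qubit); such codes are also transversal for the gate $\mathbf{T}=\mathrm{diag}(1,e^{i\pi/4})$.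 Two codes $\mathcal{Q}_1,\mathcal{Q}_2$ of length $n$ with $k$ logical qubits form a CNOT-transversal pair (control $\mathcal{Q}_1$, target $\mathcal{Q}_2$) if, for suitable mapping matrices defining their logical bases, applying a physical CNOT from qubit $i$ of the $\mathcal{Q}_1$ block to qubit $i$ of the $\mathcal{Q}_2$ block for every $i=1,\dots,n$ maps $|\bm{\psi}\rangle_L\otimes|\bm{\phi}\rangle_L\mapsto|\bm{\psi}\rangle_L\otimes|\bm{\psi}+\bm{\phi}\rangle_L$ for all $\bm{\psi},\bm{\phi}\in\mathbb{F}_2^k$, i.e., implements logical CNOT between corresponding logical qubits. *)

theory Defs
  imports Complex_Main "HOL-Library.Z2" "HOL-Library.Function_Algebras" "HOL-Library.Extended_Nat"
begin

text \<open>Binary vectors of length n are functions from a finite index type 'n (with CARD('n) = n)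
  to the field bit = F_2.  Vector addition is pointwise (Function_Algebras).
  Matrices are row families nat \<Rightarrow> ('n \<Rightarrow> bit); only the rows below the stated size are used.\<close>

definition smul :: "bit \<Rightarrow> ('n \<Rightarrow> bit) \<Rightarrow> ('n \<Rightarrow> bit)" where
  "smul c v = (\<lambda>i. c * v i)"

definition dot :: "('n::finite \<Rightarrow> bit) \<Rightarrow> ('n \<Rightarrow> bit) \<Rightarrow> bit" where
  "dot x y = (\<Sum>i\<in>UNIV. x i * y i)"

definition wt :: "('n::finite \<Rightarrow> bit) \<Rightarrow> nat" where
  "wt x = card {i. x i \<noteq> 0}"

definition row_span :: "nat set \<Rightarrow> (nat \<Rightarrow> 'n \<Rightarrow> bit) \<Rightarrow> ('n \<Rightarrow> bit) set" where
  "row_span S G = {(\<Sum>i\<in>S. smul (a i) (G i)) | a. True}"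

definition linear_code :: "('n \<Rightarrow> bit) set \<Rightarrow> bool" where
  "linear_code C \<longleftrightarrow> 0 \<in> C \<and> (\<forall>x\<in>C. \<forall>y\<in>C. x + y \<in> C)"

definition dual :: "('n::finite \<Rightarrow> bit) set \<Rightarrow> ('n \<Rightarrow> bit) set" where
  "dual C = {x. \<forall>y\<in>C. dot x y = 0}"

definition code_dim :: "('n \<Rightarrow> bit) set \<Rightarrow> nat" where
  "code_dim C = (THE d. card C = 2 ^ d)"

definition is_CSS :: "('n::finite \<Rightarrow> bit) set \<Rightarrow> ('n \<Rightarrow> bit) set \<Rightarrow> bool" where
  "is_CSS Ca Cb \<longleftrightarrow> linear_code Ca \<and> linear_code Cb \<and> dual Cb \<subseteq> Ca"

definition css_k :: "('n::finite \<Rightarrow> bit) set \<Rightarrow> ('n \<Rightarrow> bit) set \<Rightarrow> nat" where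
  "css_k Ca Cb = code_dim Ca + code_dim Cb - card (UNIV :: 'n set)"

definition css_distance :: "('n::finite \<Rightarrow> bit) set \<Rightarrow> ('n \<Rightarrow> bit) set \<Rightarrow> enat" where
  "css_distance Ca Cb =
     min (INF x \<in> Ca - dual Cb. enat (wt x)) (INF x \<in> Cb - dual Ca. enat (wt x))"

text \<open>Encoding psi A of a logical vector psi in F_2^k (only psi 0, ..., psi (k-1) matter).\<close>
definition enc :: "(nat \<Rightarrow> 'n \<Rightarrow> bit) \<Rightarrow> nat \<Rightarrow> (nat \<Rightarrow> bit) \<Rightarrow> ('n \<Rightarrow> bit)" where
  "enc A k psi = (\<Sum>i<k. smul (psi i) (A i))"

text \<open>Rows A_0..A_{k-1} are representatives of a basis of C_a / dual C_b.\<close>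
definition is_mapping_matrix ::
  "('n::finite \<Rightarrow> bit) set \<Rightarrow> ('n \<Rightarrow> bit) set \<Rightarrow> nat \<Rightarrow> (nat \<Rightarrow> 'n \<Rightarrow> bit) \<Rightarrow> bool" where
  "is_mapping_matrix Ca Cb k A \<longleftrightarrow>
     (\<forall>i<k. A i \<in> Ca) \<and>
     (\<forall>psi. enc A k psi \<in> dual Cb \<longrightarrow> (\<forall>i<k. psi i = 0)) \<and>
     (\<forall>x\<in>Ca. \<exists>psi. x + enc A k psi \<in> dual Cb)"

text \<open>States of n qubits: amplitude functions on computational basis strings.\<close>
definition basis_ket :: "'v \<Rightarrow> 'v \<Rightarrow> complex" where
  "basis_ket w = (\<lambda>v. if v = w then 1 else 0)"

definition logical_ket ::
  "(nat \<Rightarrow> 'n::finite \<Rightarrow> bit) \<Rightarrow> ('n \<Rightarrow> bit) set \<Rightarrow> nat \<Rightarrow> (nat \<Rightarrow> bit) \<Rightarrow> (('n \<Rightarrow> bit) \<Rightarrow> complex)" where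
  "logical_ket A Cb k psi =
     (\<lambda>v. (1 / sqrt (real (card (dual Cb)))) * (\<Sum>y\<in>dual Cb. basis_ket (enc A k psi + y) v))"

definition tensor :: "('v \<Rightarrow> complex) \<Rightarrow> ('w \<Rightarrow> complex) \<Rightarrow> ('v \<times> 'w \<Rightarrow> complex)" where
  "tensor f g = (\<lambda>(x, z). f x * g z)"

definition transversal_cnot ::
  "(('n::finite \<Rightarrow> bit) \<times> ('n \<Rightarrow> bit) \<Rightarrow> complex) \<Rightarrow> (('n \<Rightarrow> bit) \<times> ('n \<Rightarrow> bit) \<Rightarrow> complex)" where
  "transversal_cnot s = (\<lambda>q. \<Sum>p\<in>UNIV. s p * basis_ket (fst p, fst p + snd p) q)"

definition transversal_X :: "(('n::finite \<Rightarrow> bit) \<Rightarrow> complex) \<Rightarrow> (('n \<Rightarrow> bit) \<Rightarrow> complex)" where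
  "transversal_X s = (\<lambda>w. \<Sum>v\<in>UNIV. s v * basis_ket (v + 1) w)"

definition cnot_transversal_with ::
  "nat \<Rightarrow> (nat \<Rightarrow> 'n::finite \<Rightarrow> bit) \<Rightarrow> ('n \<Rightarrow> bit) set \<Rightarrow> (nat \<Rightarrow> 'n \<Rightarrow> bit) \<Rightarrow> ('n \<Rightarrow> bit) set \<Rightarrow> bool" where
  "cnot_transversal_with k A Cb B Cd \<longleftrightarrow>
     (\<forall>psi phi. transversal_cnot (tensor (logical_ket A Cb k psi) (logical_ket B Cd k phi))
               = tensor (logical_ket A Cb k psi) (logical_ket B Cd k (psi + phi)))"

definition triorthogonal :: "nat \<Rightarrow> (nat \<Rightarrow> 'n::finite \<Rightarrow> bit) \<Rightarrow> bool" where
  "triorthogonal m G \<longleftrightarrow>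
     (\<forall>a<m. \<forall>b<m. a \<noteq> b \<longrightarrow> (\<Sum>i\<in>UNIV. G a i * G b i) = 0) \<and>
     (\<forall>a<m. \<forall>b<m. \<forall>c<m. a \<noteq> b \<and> a \<noteq> c \<and> b \<noteq> c \<longrightarrow> (\<Sum>i\<in>UNIV. G a i * G b i * G c i) = 0)"

definition rows_independent :: "nat \<Rightarrow> (nat \<Rightarrow> 'n \<Rightarrow> bit) \<Rightarrow> bool" where
  "rows_independent m G \<longleftrightarrow> (\<forall>a. (\<Sum>i<m. smul (a i) (G i)) = 0 \<longrightarrow> (\<forall>i<m. a i = 0))"

end

theory Submission
  imports Defs "HOL-Library.Cardinality" "HOL-Library.FuncSet" "HOL-Computational_Algebra.Primes"
begin

text \<open>The first k rows of G are orthonormal: odd weight gives each of them inner product 1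
  with itself, and triorthogonality makes all rows pairwise orthogonal. So the coefficients of
  \<open>enc G k \<psi>\<close> are its inner products with these rows, and distinct \<open>\<psi>\<close> give distinct cosets of
  any dual code containing the rows. Hence G is a mapping matrix of CSS(C1, C2), since
  C1 = span G1 + span G0 with span G0 inside the dual of C2, and of CSS(C, C), where the cosets
  fill C because \<open>|C| |C^\<bottom>| = 2^n\<close> and \<open>C^\<bottom> \<subseteq> C\<close> give \<open>|C| = 2^k |C^\<bottom>|\<close>.

  With the same mapping matrix on both blocks, the transversal CNOT sends the support
  \<open>(enc \<psi> + C2^\<bottom>) \<times> (enc \<phi> + C^\<bottom>)\<close> to pairs in \<open>(enc \<psi> + C2^\<bottom>) \<times> (enc (\<psi> + \<phi>) + C^\<bottom>)\<close>
  because \<open>C2^\<bottom> \<subseteq> C^\<bottom>\<close>. Finally a vector of C orthogonal to all rows of G1 lies in \<open>C^\<bottom>\<close>, so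
  every logical operator of CSS(C, C) is one of CSS(C1, C2), whence d' \<ge> d.\<close>

text \<open>Z2 would otherwise rewrite the field operations on bit into \<open>xor\<close> and \<open>and\<close>.\<close>

declare add_bit_eq_xor [simp del] mult_bit_eq_and [simp del]

lemma UNIV_bit: "(UNIV :: bit set) = {0, 1}"
  by (auto intro: bit.exhaust)

instance bit :: finite
  by standard (simp add: UNIV_bit)

lemma card_bit: "CARD(bit) = 2"
  by (simp add: UNIV_bit)

lemma bit_add_self [simp]: "(a::bit) + a = 0"
  by (cases a) simp_all

lemma bit_add_eq_0_iff [simp]: "(a::bit) + b = 0 \<longleftrightarrow> a = b"
  by (cases a; cases b) simp_all

lemma vec_add_self [simp]: "(v::'a \<Rightarrow> bit) + v = 0"
  by (rule ext) simp

lemma vec_add_cancel_left [simp]: "(v::'a \<Rightarrow> bit) + (v + w) = w"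
  by (simp add: add.assoc [symmetric])

lemma vec_add_cancel_right [simp]: "(w::'a \<Rightarrow> bit) + v + v = w"
  by (simp add: add.assoc)

lemma vec_add_eq_swap: "(a::'a \<Rightarrow> bit) + b = c + d \<Longrightarrow> a + c = b + d"
  by (metis add.assoc add.commute vec_add_cancel_left)

lemma vec_add_rearrange: "(x::'a \<Rightarrow> bit) + z + p + (z + (s + p)) = x + s"
  by (simp only: add.assoc add.left_commute add.commute vec_add_cancel_left vec_add_self add_0_right add_0_left)

lemma vec_eq_add_iff: "((v::'a \<Rightarrow> bit) = u + w) \<longleftrightarrow> (w = v + u)"
  by (metis add.commute vec_add_cancel_left)

lemma vec_add_eq_iff: "(x::'a \<Rightarrow> bit) + u = w \<longleftrightarrow> x = u + w"
  using vec_eq_add_iff [of x u w] by auto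

lemma dot_add_left: "dot (x + y) z = dot x z + dot y z"
  by (simp add: dot_def distrib_right sum.distrib)

lemma dot_add_right: "dot x (y + z) = dot x y + dot x z"
  by (simp add: dot_def distrib_left sum.distrib)

lemma dot_commute: "dot x y = dot y x"
  by (simp add: dot_def mult.commute)

lemma dot_smul_left: "dot (smul c x) y = c * dot x y"
  by (simp add: dot_def smul_def sum_distrib_left mult.assoc)

lemma dot_zero_left [simp]: "dot 0 y = 0"
  by (simp add: dot_def)

lemma dot_sum_left: "finite S \<Longrightarrow> dot (\<Sum>i\<in>S. f i) y = (\<Sum>i\<in>S. dot (f i) y)"
proof (induction S rule: finite_induct)
  case (insert x F)
  then show ?case by (simp add: dot_add_left del: plus_fun_apply)
qed (simp only: sum.empty dot_zero_left)

lemma dot_self_eq_wt: "dot x x = of_nat (wt x)"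
proof -
  have "dot x x = (\<Sum>i\<in>UNIV. if x i \<noteq> 0 then 1 else 0)"
    unfolding dot_def by (rule sum.cong) (auto intro: bit.exhaust [of "x _"])
  then show ?thesis
    by (simp add: sum.If_cases wt_def)
qed

lemma of_nat_odd_bit: "odd n \<Longrightarrow> (of_nat n :: bit) = 1"
  by (auto elim: oddE)

lemma dual_add: "x \<in> dual C \<Longrightarrow> y \<in> dual C \<Longrightarrow> x + y \<in> dual C"
  by (simp add: dual_def dot_add_left)

lemma dual_antimono: "A \<subseteq> B \<Longrightarrow> dual B \<subseteq> dual A"
  by (auto simp: dual_def)

lemma subset_dual_dual: "A \<subseteq> dual (dual A)"
  by (auto simp: dual_def dot_commute)

lemma smul_add_left: "smul (a + b) v = smul a v + smul b v"
  by (rule ext) (simp add: smul_def distrib_right)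

lemma smul_zero_left [simp]: "smul 0 v = 0"
  by (rule ext) (simp add: smul_def)

lemma smul_one_left [simp]: "smul 1 v = v"
  by (rule ext) (simp add: smul_def)

lemma enc_add: "enc A k (\<psi> + \<phi>) = enc A k \<psi> + enc A k \<phi>"
  by (simp add: enc_def smul_add_left sum.distrib)

lemma enc_eq_zero: "(\<And>j. j < k \<Longrightarrow> \<psi> j = 0) \<Longrightarrow> enc A k \<psi> = 0"
  by (simp add: enc_def)

lemma linear_code_zero: "linear_code C \<Longrightarrow> 0 \<in> C"
  by (simp add: linear_code_def)

lemma linear_code_add: "linear_code C \<Longrightarrow> x \<in> C \<Longrightarrow> y \<in> C \<Longrightarrow> x + y \<in> C"
  by (simp add: linear_code_def)

lemma linear_code_sum:
  assumes "linear_code C" and "finite S" and "\<And>i. i \<in> S \<Longrightarrow> v i \<in> C"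
  shows "(\<Sum>i\<in>S. smul (c i) (v i)) \<in> C"
  using assms(2,3)
proof (induction S rule: finite_induct)
  case empty
  show ?case by (simp only: sum.empty linear_code_zero [OF assms(1)])
next
  case (insert x F)
  have "smul (c x) (v x) \<in> C"
    using insert.prems linear_code_zero [OF assms(1)] by (cases "c x") simp_all
  with insert show ?case
    by (simp add: linear_code_add [OF assms(1)] del: plus_fun_apply)
qed

lemma enc_in_code: "linear_code C \<Longrightarrow> (\<And>i. i < k \<Longrightarrow> A i \<in> C) \<Longrightarrow> enc A k \<psi> \<in> C"
  unfolding enc_def by (rule linear_code_sum) auto

lemma row_in_row_span:
  assumes "finite S" and "j \<in> S"
  shows "G j \<in> row_span S G"
proof -
  have "G j = (\<Sum>i\<in>S. if i = j then G i else 0)"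
    using assms by (simp add: sum.delta')
  also have "\<dots> = (\<Sum>i\<in>S. smul (if i = j then 1 else 0) (G i))"
    by (rule sum.cong) simp_all
  finally show ?thesis
    unfolding row_span_def by (intro CollectI exI conjI TrueI)
qed

lemma row_in_dual_row_span:
  assumes "finite S" and "\<And>i. i \<in> S \<Longrightarrow> dot x (G i) = 0"
  shows "x \<in> dual (row_span S G)"
  using assms by (auto simp: dual_def row_span_def dot_commute [of x] dot_sum_left dot_smul_left)

subsection \<open>Size of the dual code\<close>

definition bit_sign :: "bit \<Rightarrow> int" where
  "bit_sign b = (if b = 0 then 1 else -1)"

lemma bit_sign_add_one: "bit_sign (b + 1) = - bit_sign b"
  by (cases b) (simp_all add: bit_sign_def)

lemma sum_eq_0_if_bij_negates:
  fixes f :: "'a \<Rightarrow> 'b::linordered_ab_group_add"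
  assumes "bij_betw g S S" and "\<And>x. x \<in> S \<Longrightarrow> f (g x) = - f x"
  shows "sum f S = 0"
proof -
  have "sum f S = sum (\<lambda>x. f (g x)) S"
    by (simp add: sum.reindex_bij_betw [OF assms(1)])
  also have "\<dots> = - sum f S"
    using assms(2) by (simp add: sum_negf)
  finally show ?thesis by simp
qed

lemma translation_bij: "bij_betw (\<lambda>y. y + e) (UNIV :: ('a \<Rightarrow> bit) set) UNIV"
  by (rule bij_betw_byWitness [where f' = "\<lambda>y. y + e"]) auto

lemma sum_bit_sign_dot_eq_0:
  fixes x :: "'n::finite \<Rightarrow> bit"
  assumes "x \<noteq> 0"
  shows "(\<Sum>y\<in>UNIV. bit_sign (dot x y)) = 0"
proof -
  obtain i where "x i = 1"
    using assms by (auto simp: fun_eq_iff)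
  define e :: "'n \<Rightarrow> bit" where "e = (\<lambda>j. if j = i then 1 else 0)"
  have "dot x e = 1"
    using \<open>x i = 1\<close> by (simp add: dot_def e_def if_distrib [of "(*) _"] cong: if_cong)
  then show ?thesis
    by (intro sum_eq_0_if_bij_negates [OF translation_bij [of e]])
      (simp add: dot_add_right bit_sign_add_one)
qed

lemma sum_bit_sign_dot_code_eq_0:
  assumes "linear_code C" and "y \<notin> dual C"
  shows "(\<Sum>x\<in>C. bit_sign (dot x y)) = 0"
proof -
  obtain c where c: "c \<in> C" "dot c y = 1"
    using assms(2) by (auto simp: dual_def dot_commute)
  have "bij_betw (\<lambda>x. x + c) C C"
    by (rule bij_betw_byWitness [where f' = "\<lambda>x. x + c"]) (use assms(1) c in \<open>auto simp: linear_code_add\<close>)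
  then show ?thesis
    by (rule sum_eq_0_if_bij_negates) (simp add: dot_add_left c(2) bit_sign_add_one)
qed

text \<open>Evaluate \<open>\<Sum>x\<in>C. \<Sum>y. (-1)^(x\<cdot>y)\<close> in both orders.\<close>

lemma card_code_mult_card_dual:
  fixes C :: "('n::finite \<Rightarrow> bit) set"
  assumes "linear_code C"
  shows "card C * card (dual C) = 2 ^ CARD('n)"
proof -
  have sum_y: "(\<Sum>y\<in>UNIV. bit_sign (dot x y)) = (if x = 0 then int (2 ^ CARD('n)) else 0)"
    for x :: "'n \<Rightarrow> bit"
  proof (cases "x = 0")
    case True
    then show ?thesis by (simp add: bit_sign_def card_fun card_bit)
  qed (simp add: sum_bit_sign_dot_eq_0)
  have sum_x: "(\<Sum>x\<in>C. bit_sign (dot x y)) = (if y \<in> dual C then int (card C) else 0)" for y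
    using sum_bit_sign_dot_code_eq_0 [OF assms, of y]
    by (auto simp: dual_def dot_commute bit_sign_def)
  have "int (2 ^ CARD('n)) = (\<Sum>x\<in>C. \<Sum>y\<in>UNIV. bit_sign (dot x y))"
    using linear_code_zero [OF assms] by (simp add: sum_y sum.delta)
  also have "\<dots> = (\<Sum>y\<in>UNIV. \<Sum>x\<in>C. bit_sign (dot x y))"
    by (rule sum.swap)
  also have "\<dots> = int (card C * card (dual C))"
    by (simp add: sum_x sum.If_cases)
  finally show ?thesis
    by (simp only: of_nat_eq_iff eq_commute)
qed

lemma code_dim_eqI: "card C = 2 ^ d \<Longrightarrow> code_dim C = d"
  unfolding code_dim_def by (rule the_equality) (simp_all add: power_inject_exp)

lemma card_code_eq_power:
  fixes C :: "('n::finite \<Rightarrow> bit) set"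
  assumes "linear_code C"
  shows "card C = 2 ^ code_dim C" and "code_dim C \<le> CARD('n)"
proof -
  have "card C dvd 2 ^ CARD('n)"
    using card_code_mult_card_dual [OF assms] by (metis dvd_triv_left)
  then obtain d where "d \<le> CARD('n)" "card C = 2 ^ d"
    by (auto simp: divides_primepow_nat)
  then show "card C = 2 ^ code_dim C" and "code_dim C \<le> CARD('n)"
    by (simp_all add: code_dim_eqI)
qed

lemma card_dual_eq_power:
  fixes C :: "('n::finite \<Rightarrow> bit) set"
  assumes "linear_code C"
  shows "card (dual C) = 2 ^ (CARD('n) - code_dim C)"
proof -
  have "2 ^ code_dim C * card (dual C) = 2 ^ code_dim C * 2 ^ (CARD('n) - code_dim C)"
    using card_code_mult_card_dual [OF assms] card_code_eq_power [OF assms]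
    by (simp flip: power_add)
  then show ?thesis by simp
qed

lemma card_eq_power_css_k_mult_card_dual:
  fixes C :: "('n::finite \<Rightarrow> bit) set"
  assumes "linear_code C" and "dual C \<subseteq> C"
  shows "card C = 2 ^ css_k C C * card (dual C)"
proof -
  have "card (dual C) \<le> card C"
    using assms(2) by (simp add: card_mono)
  then have "CARD('n) - code_dim C \<le> code_dim C"
    using card_code_eq_power [OF assms(1)] card_dual_eq_power [OF assms(1)] by simp
  then have "code_dim C = css_k C C + (CARD('n) - code_dim C)"
    using card_code_eq_power(2) [OF assms(1)] by (simp add: css_k_def)
  then show ?thesis
    using card_code_eq_power(1) [OF assms(1)] card_dual_eq_power [OF assms(1)]
    by (metis power_add)
qed

subsection \<open>Orthonormal rows as a mapping matrix\<close>

definition orthonormal_rows :: "nat \<Rightarrow> (nat \<Rightarrow> 'n::finite \<Rightarrow> bit) \<Rightarrow> bool" where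
  "orthonormal_rows k A \<longleftrightarrow> (\<forall>i<k. \<forall>j<k. dot (A i) (A j) = (if i = j then 1 else 0))"

lemma dot_enc_row:
  assumes "orthonormal_rows k A" and "j < k"
  shows "dot (enc A k \<psi>) (A j) = \<psi> j"
proof -
  have "dot (enc A k \<psi>) (A j) = (\<Sum>i<k. \<psi> i * dot (A i) (A j))"
    by (simp add: enc_def dot_sum_left dot_smul_left)
  also have "\<dots> = (\<Sum>i<k. if i = j then \<psi> j else 0)"
    using assms by (intro sum.cong) (auto simp: orthonormal_rows_def)
  finally show ?thesis
    using assms(2) by simp
qed

lemma enc_in_dual_imp_eq_0:
  assumes "orthonormal_rows k A" and "\<And>i. i < k \<Longrightarrow> A i \<in> Cb"
    and "enc A k \<psi> \<in> dual Cb" and "j < k"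
  shows "\<psi> j = 0"
  using assms dot_enc_row [OF assms(1,4), of \<psi>] by (auto simp: dual_def)

lemma inj_on_enc_add_dual:
  assumes "orthonormal_rows k A" and "\<And>i. i < k \<Longrightarrow> A i \<in> Cb"
  shows "inj_on (\<lambda>(\<psi>, z). enc A k \<psi> + z) (({..<k} \<rightarrow>\<^sub>E UNIV) \<times> dual Cb)"
proof (rule inj_onI, clarify)
  fix \<psi> z \<psi>' z'
  assume \<psi>: "\<psi> \<in> ({..<k} \<rightarrow>\<^sub>E UNIV)" "\<psi>' \<in> ({..<k} \<rightarrow>\<^sub>E UNIV)"
    and z: "z \<in> dual Cb" "z' \<in> dual Cb" and eq: "enc A k \<psi> + z = enc A k \<psi>' + z'"
  have "enc A k (\<psi> + \<psi>') = z + z'"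
    using vec_add_eq_swap [OF eq] by (simp add: enc_add)
  then have "enc A k (\<psi> + \<psi>') \<in> dual Cb"
    using dual_add [OF z] by simp
  then have "(\<psi> + \<psi>') j = 0" if "j < k" for j
    using enc_in_dual_imp_eq_0 [OF assms _ that] by blast
  then have "\<psi> j = \<psi>' j" if "j < k" for j
    using that by simp
  with \<psi> have "\<psi> = \<psi>'"
    by (intro PiE_ext) auto
  with eq show "\<psi> = \<psi>' \<and> z = z'"
    by simp
qed

text \<open>The cosets \<open>enc A k \<psi> + Cb^\<bottom>\<close> are pairwise disjoint and lie in Ca; by counting they cover it.\<close>

lemma ex_enc_add_in_dual:
  assumes lin: "linear_code Ca" and dual_sub: "dual Cb \<subseteq> Ca"
    and ortho: "orthonormal_rows k A"
    and rows_Ca: "\<And>i. i < k \<Longrightarrow> A i \<in> Ca" and rows_Cb: "\<And>i. i < k \<Longrightarrow> A i \<in> Cb"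
    and card: "card Ca = 2 ^ k * card (dual Cb)" and x: "x \<in> Ca"
  shows "\<exists>\<psi>. x + enc A k \<psi> \<in> dual Cb"
proof -
  let ?D = "({..<k} \<rightarrow>\<^sub>E (UNIV :: bit set)) \<times> dual Cb"
  let ?f = "\<lambda>(\<psi>, z). enc A k \<psi> + z"
  have image_sub: "?f ` ?D \<subseteq> Ca"
  proof clarify
    fix \<psi> z
    assume "z \<in> dual Cb"
    with dual_sub rows_Ca show "enc A k \<psi> + z \<in> Ca"
      by (intro linear_code_add [OF lin] enc_in_code [OF lin]) auto
  qed
  have "card (?f ` ?D) = card ?D"
    by (intro card_image inj_on_enc_add_dual ortho rows_Cb)
  also have "\<dots> = card Ca"
    using card by (simp add: card_cartesian_product card_PiE card_bit)
  finally have "?f ` ?D = Ca"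
    by (rule card_subset_eq [OF finite image_sub])
  with x have "x \<in> ?f ` ?D"
    by simp
  then obtain \<psi> z where z: "z \<in> dual Cb" and x_eq: "x = enc A k \<psi> + z"
    by auto
  have "x + enc A k \<psi> = z"
    unfolding vec_add_eq_iff by (rule x_eq)
  with z show ?thesis
    by blast
qed

lemma is_mapping_matrix_of_card:
  assumes "linear_code Ca" and "dual Cb \<subseteq> Ca" and "orthonormal_rows k A"
    and "\<And>i. i < k \<Longrightarrow> A i \<in> Ca" and "\<And>i. i < k \<Longrightarrow> A i \<in> Cb"
    and "card Ca = 2 ^ k * card (dual Cb)"
  shows "is_mapping_matrix Ca Cb k A"
  unfolding is_mapping_matrix_def
proof (intro conjI allI impI ballI)
  show "A i \<in> Ca" if "i < k" for i
    using assms(4) [OF that] .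
  show "\<psi> i = 0" if "enc A k \<psi> \<in> dual Cb" and "i < k" for \<psi> i
    using enc_in_dual_imp_eq_0 [OF assms(3,5) that] .
  show "\<exists>\<psi>. x + enc A k \<psi> \<in> dual Cb" if "x \<in> Ca" for x
    using ex_enc_add_in_dual [OF assms that] .
qed

lemma sum_lessThan_eq_enc_add:
  "k \<le> m \<Longrightarrow> (\<Sum>i<m. smul (a i) (G i)) = enc G k a + (\<Sum>i\<in>{k..<m}. smul (a i) (G i))"
  unfolding enc_def
  using sum.atLeastLessThan_concat [of 0 k m "\<lambda>i. smul (a i) (G i)"] by (simp add: atLeast0LessThan)

lemma is_mapping_matrix_row_span:
  assumes "k \<le> m" and ortho: "orthonormal_rows k G"
    and orth: "\<And>i j. i < k \<Longrightarrow> j \<in> {k..<m} \<Longrightarrow> dot (G i) (G j) = 0"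
  shows "is_mapping_matrix (row_span {..<m} G) (dual (row_span {k..<m} G)) k G"
  unfolding is_mapping_matrix_def
proof (intro conjI allI impI ballI)
  fix i
  assume "i < k"
  with assms(1) show "G i \<in> row_span {..<m} G"
    by (simp add: row_in_row_span)
next
  fix \<psi> i
  assume "enc G k \<psi> \<in> dual (dual (row_span {k..<m} G))" and "i < k"
  moreover have "G j \<in> dual (row_span {k..<m} G)" if "j < k" for j
    using that orth by (intro row_in_dual_row_span) simp_all
  ultimately show "\<psi> i = 0"
    by (rule enc_in_dual_imp_eq_0 [OF ortho, rotated])
next
  fix x
  assume "x \<in> row_span {..<m} G"
  then obtain a where "x = (\<Sum>i<m. smul (a i) (G i))"
    by (auto simp: row_span_def)
  then have "x = enc G k a + (\<Sum>i\<in>{k..<m}. smul (a i) (G i))"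
    by (simp only: sum_lessThan_eq_enc_add [OF assms(1)])
  then have "x + enc G k a = (\<Sum>i\<in>{k..<m}. smul (a i) (G i))"
    unfolding vec_add_eq_iff .
  also have "\<dots> \<in> dual (dual (row_span {k..<m} G))"
    using subset_dual_dual by (fastforce simp: row_span_def)
  finally show "\<exists>\<psi>. x + enc G k \<psi> \<in> dual (dual (row_span {k..<m} G))"
    by blast
qed

subsection \<open>Transversal CNOT and distance\<close>

lemma logical_ket_apply:
  "logical_ket A Cb k \<psi> v = (if v + enc A k \<psi> \<in> dual Cb then 1 / sqrt (real (card (dual Cb))) else 0)"
proof -
  have "(\<Sum>y\<in>dual Cb. basis_ket (enc A k \<psi> + y) v) = (\<Sum>y\<in>dual Cb. if y = v + enc A k \<psi> then 1 else 0)"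
    unfolding basis_ket_def by (rule sum.cong) (simp_all add: vec_eq_add_iff)
  then show ?thesis
    by (simp add: logical_ket_def sum.delta')
qed

lemma transversal_cnot_apply: "transversal_cnot s (x, z) = s (x, x + z)"
proof -
  have "transversal_cnot s (x, z) = (\<Sum>p\<in>UNIV. if p = (x, x + z) then s p else 0)"
    unfolding transversal_cnot_def basis_ket_def
    by (rule sum.cong) (auto simp: vec_eq_add_iff add.commute)
  then show ?thesis
    by simp
qed

lemma dual_iff_if_add_in_dual: "w + w' \<in> dual C \<Longrightarrow> w \<in> dual C \<longleftrightarrow> w' \<in> dual C"
  using dual_add [where x = w and y = "w + w'" and C = C] dual_add [where x = "w + w'" and y = w' and C = C]
  by auto

lemma cnot_transversal_with_same_rows:
  assumes "dual Cb \<subseteq> dual Cd"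
  shows "cnot_transversal_with k A Cb A Cd"
  unfolding cnot_transversal_with_def
proof (intro allI ext, clarify)
  fix \<psi> \<phi> x z
  have "logical_ket A Cd k \<phi> (x + z) = logical_ket A Cd k (\<psi> + \<phi>) z"
    if "x + enc A k \<psi> \<in> dual Cb"
  proof -
    have "(x + z + enc A k \<phi>) + (z + enc A k (\<psi> + \<phi>)) = x + enc A k \<psi>"
      by (simp only: enc_add vec_add_rearrange)
    also have "\<dots> \<in> dual Cd"
      using that assms by blast
    finally have "x + z + enc A k \<phi> \<in> dual Cd \<longleftrightarrow> z + enc A k (\<psi> + \<phi>) \<in> dual Cd"
      by (rule dual_iff_if_add_in_dual)
    then show ?thesis
      by (simp only: logical_ket_apply)
  qed
  moreover have "logical_ket A Cb k \<psi> x = 0" if "x + enc A k \<psi> \<notin> dual Cb"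
    using that by (simp add: logical_ket_apply)
  ultimately show "transversal_cnot (tensor (logical_ket A Cb k \<psi>) (logical_ket A Cd k \<phi>)) (x, z)
      = tensor (logical_ket A Cb k \<psi>) (logical_ket A Cd k (\<psi> + \<phi>)) (x, z)"
    by (cases "x + enc A k \<psi> \<in> dual Cb") (simp_all add: transversal_cnot_apply tensor_def)
qed

lemma in_dual_if_orthogonal_to_rows:
  assumes "is_mapping_matrix C C k A" and "orthonormal_rows k A"
    and "x \<in> C" and "\<And>j. j < k \<Longrightarrow> dot x (A j) = 0"
  shows "x \<in> dual C"
proof -
  obtain \<psi> where \<psi>: "x + enc A k \<psi> \<in> dual C"
    using assms(1,3) by (auto simp: is_mapping_matrix_def)
  have "\<psi> j = 0" if "j < k" for j
  proof -
    have "dot (x + enc A k \<psi>) (A j) = 0"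
      using \<psi> assms(1) that by (simp add: dual_def is_mapping_matrix_def)
    then show ?thesis
      using assms(4) dot_enc_row [OF assms(2) that] that by (simp add: dot_add_left)
  qed
  with \<psi> show ?thesis
    by (simp add: enc_eq_zero)
qed

lemma diff_dual_subset_if_mapping_rows:
  assumes "is_mapping_matrix C C k A" and "orthonormal_rows k A"
    and "\<And>j. j < k \<Longrightarrow> A j \<in> Ca" and "C \<subseteq> Cb"
  shows "C - dual C \<subseteq> Cb - dual Ca"
proof
  fix x
  assume x: "x \<in> C - dual C"
  have "x \<notin> dual Ca"
  proof
    assume "x \<in> dual Ca"
    then have "dot x (A j) = 0" if "j < k" for j
      using assms(3) [OF that] by (simp add: dual_def)
    with x have "x \<in> dual C"
      using in_dual_if_orthogonal_to_rows [OF assms(1,2)] by blast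
    with x show False
      by blast
  qed
  with x assms(4) show "x \<in> Cb - dual Ca"
    by blast
qed

lemma css_distance_le_symmetric:
  assumes "C - dual C \<subseteq> Cb - dual Ca"
  shows "css_distance Ca Cb \<le> css_distance C C"
proof -
  have "css_distance Ca Cb \<le> (INF x\<in>Cb - dual Ca. enat (wt x))"
    by (simp add: css_distance_def)
  also have "\<dots> \<le> (INF x\<in>C - dual C. enat (wt x))"
    using assms by (rule INF_superset_mono) simp
  also have "\<dots> = css_distance C C"
    by (simp add: css_distance_def)
  finally show ?thesis .
qed

lemma triorthogonal_dot_eq_0:
  "triorthogonal m G \<Longrightarrow> a < m \<Longrightarrow> b < m \<Longrightarrow> a \<noteq> b \<Longrightarrow> dot (G a) (G b) = 0"
  by (simp add: triorthogonal_def dot_def)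

theorem lemma1:
  fixes G :: "nat \<Rightarrow> 'n::finite \<Rightarrow> bit"
    and m k :: nat
    and C1 C2 C :: "('n \<Rightarrow> bit) set"
  assumes km: "k \<le> m"
    and tri: "triorthogonal m G"
    and indep: "rows_independent m G"
    and odd_rows: "\<forall>i<m. (odd (wt (G i)) \<longleftrightarrow> i < k)"
    and C1_def: "C1 = row_span {..<m} G"
    and C2_def: "C2 = dual (row_span {k..<m} G)"
    and T_tri: "\<forall>psi. transversal_X (logical_ket G C2 k psi) = logical_ket G C2 k (psi + 1)"
    and C_lin: "linear_code C"
    and C_between: "C1 \<subseteq> C" "C \<subseteq> C2"
    and C_sym: "is_CSS C C"
    and C_k: "css_k C C = k"
  shows "is_mapping_matrix C1 C2 k G \<and> (\<exists>B. is_mapping_matrix C C k B \<and> cnot_transversal_with k G C2 B C)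
         \<and> css_distance C C \<ge> css_distance C1 C2"
proof -
  have orth: "dot (G a) (G b) = 0" if "a < m" "b < m" "a \<noteq> b" for a b
    using triorthogonal_dot_eq_0 [OF tri that] .
  have ortho: "orthonormal_rows k G"
    using orth odd_rows km by (auto simp: orthonormal_rows_def dot_self_eq_wt of_nat_odd_bit)
  have mapping_T: "is_mapping_matrix C1 C2 k G"
    unfolding C1_def C2_def using km ortho orth by (intro is_mapping_matrix_row_span) auto
  then have rows_C1: "G i \<in> C1" if "i < k" for i
    using that by (simp add: is_mapping_matrix_def)
  have dual_C: "dual C \<subseteq> C"
    using C_sym by (simp add: is_CSS_def)
  have mapping_Sym: "is_mapping_matrix C C k G"
    using C_lin dual_C ortho rows_C1 C_between(1)
      card_eq_power_css_k_mult_card_dual [OF C_lin dual_C] C_k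
    by (intro is_mapping_matrix_of_card) auto
  have cnot: "cnot_transversal_with k G C2 G C"
    using dual_antimono [OF C_between(2)] by (rule cnot_transversal_with_same_rows)
  have "css_distance C1 C2 \<le> css_distance C C"
    using diff_dual_subset_if_mapping_rows [OF mapping_Sym ortho rows_C1 C_between(2)]
    by (rule css_distance_le_symmetric)
  with mapping_T mapping_Sym cnot show ?thesis
    by blast
qed

end
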